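(* For every $n\ge1$, the nilpotency index of any $n$-dimensional complex nilpotent anticommutative algebra is at most $F_n+1$. This bound is sharp; for $n\ge6$ it is attained by the algebras of the family $\mathcal{T}_n$.
   Context: $F_n$ denotes the Fibonacci numbers, $F_1=F_2=1$, $F_{n}=F_{n-1}+F_{n-2}$. For an algebra $N$, $N^1=N$, $N^{k+1}=\sum_{i=1}^kN^iN^{k+1-i}$; $N$ is nilpotent if some $N^k=0$, and its nilpotency index is the least such $k\ge1$. An algebra is anticommutative if $xy=-yx$. With respect to a basis $e_1,\dots,e_n$ and structure constants $e_ie_j=\sum_kc_{ij}^ke_k$, for $n\ge6$, $\mathcal{T}_n$ is the family of anticommutative algebras with $c_{ij}^k=0$ whenever $k\le\max\{i,j\}$, such that: $e_ie_{i+1}=e_{i+2}$ for $1\le i\le n-2$; $c_{1i}^{i+2}=c_{2i}^{i+2}=0$ for $4\le i\le n-2$; $c_{13}^4=c_{14}^5=c_{24}^5=c_{15}^6=c_{25}^6=c_{13}^6=0$; $c_{13}^5\ne0$; $c_{35}^6=1$ and (when $n\ge7$) $c_{46}^7=1$; other structure constants arbitrary subject to these and anticommutativity. *)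

theory Defs
  imports Complex_Main "HOL-Number_Theory.Fib"
begin

text \<open>An n-dimensional complex algebra is given by structure constants c i j k
  (for i, j, k in {1..n}) w.r.t. a basis e_1..e_n: e_i e_j = sum_k c i j k e_k.\<close>

type_synonym sconst = "nat \<Rightarrow> nat \<Rightarrow> nat \<Rightarrow> complex"
type_synonym cvec = "nat \<Rightarrow> complex"

definition vecs :: "nat \<Rightarrow> cvec set" where
  "vecs n = {x. \<forall>k. k \<notin> {1..n} \<longrightarrow> x k = 0}"

definition amult :: "sconst \<Rightarrow> nat \<Rightarrow> cvec \<Rightarrow> cvec \<Rightarrow> cvec" where
  "amult c n x y = (\<lambda>k. if k \<in> {1..n}
      then (\<Sum>i=1..n. \<Sum>j=1..n. x i * y j * c i j k) else 0)"

definition cspan :: "cvec set \<Rightarrow> cvec set" where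
  "cspan S = {v. \<exists>t r. finite t \<and> t \<subseteq> S \<and> v = (\<lambda>k. \<Sum>a\<in>t. r a * a k)}"

text \<open>Powers: N^1 = N, N^k = sum_{i=1}^{k-1} N^i N^(k-i), where N^i N^j is the
  span of all products.  (The value at k = 0 is irrelevant.)\<close>
function apow :: "sconst \<Rightarrow> nat \<Rightarrow> nat \<Rightarrow> cvec set" where
  "apow c n k = (if k \<le> 1 then vecs n
     else cspan (\<Union>i\<in>{1..<k}. {amult c n x y | x y. x \<in> apow c n i \<and> y \<in> apow c n (k - i)}))"
  by auto
termination
  by (relation "measure (\<lambda>(c, n, k). k)") auto

definition anticomm :: "sconst \<Rightarrow> nat \<Rightarrow> bool" where
  "anticomm c n \<longleftrightarrow> (\<forall>x\<in>vecs n. \<forall>y\<in>vecs n. amult c n x y = (\<lambda>k. - amult c n y x k))"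

definition nilpotent_alg :: "sconst \<Rightarrow> nat \<Rightarrow> bool" where
  "nilpotent_alg c n \<longleftrightarrow> (\<exists>k\<ge>1. apow c n k = {\<lambda>_. 0})"

definition nil_index :: "sconst \<Rightarrow> nat \<Rightarrow> nat" where
  "nil_index c n = (LEAST k. k \<ge> 1 \<and> apow c n k = {\<lambda>_. 0})"

definition in_T :: "nat \<Rightarrow> sconst \<Rightarrow> bool" where
  "in_T n c \<longleftrightarrow> n \<ge> 6 \<and> anticomm c n
     \<and> (\<forall>i\<in>{1..n}. \<forall>j\<in>{1..n}. \<forall>k\<in>{1..n}. k \<le> max i j \<longrightarrow> c i j k = 0)
     \<and> (\<forall>i. 1 \<le> i \<and> i \<le> n - 2 \<longrightarrow> (\<forall>k\<in>{1..n}. c i (i+1) k = (if k = i + 2 then 1 else 0)))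
     \<and> (\<forall>i. 4 \<le> i \<and> i \<le> n - 2 \<longrightarrow> c 1 i (i+2) = 0 \<and> c 2 i (i+2) = 0)
     \<and> c 1 3 4 = 0 \<and> c 1 4 5 = 0 \<and> c 2 4 5 = 0 \<and> c 1 5 6 = 0 \<and> c 2 5 6 = 0 \<and> c 1 3 6 = 0
     \<and> c 1 3 5 \<noteq> 0
     \<and> c 3 5 6 = 1 \<and> (n \<ge> 7 \<longrightarrow> c 4 6 7 = 1)"

end

theory Submission
  imports Defs "HOL-Library.Function_Algebras"
begin

text \<open>
  Write N^k for the powers of the algebra and d_k for their dimensions. The upper bound follows
  from k \<le> F(n - d_k + 1) whenever N^k \<noteq> 0, proved by strong induction on k. Let s < k be the
  last index with N^s \<noteq> N^k, so that N^(s+1) = N^k. A product N^i N^(K-i) already lies in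
  N^(K+1) when N^i or N^(K-i) does not drop at that step; hence, by nilpotency, N^B = 0 as soon
  as all products of two dropping powers with indices summing to at least B are absorbed one step
  further. This gives k \<le> 2s in general. If N^(s+1) has codimension one in N^s,
  anticommutativity gives N^s N^s \<subseteq> N^(2s+1), and with p < s the last drop before s one gets
  k \<le> s + p. As the dimension drops at s, by at least two outside the codimension-one case,
  the Fibonacci recursion closes the induction.

  For sharpness, in a strictly triangular algebra with e_i e_(i+1) = e_(i+2), the product of
  elements of N^F(k-2) and N^F(k-1) with leading terms e_(k-2) and e_(k-1) has leading term e_k,
  so N^F(n) \<noteq> 0.
\<close>

declare apow.simps[simp del]

lemma apow_le_one: "k \<le> 1 \<Longrightarrow> apow c n k = vecs n"
  by (subst apow.simps) simp

lemma apow_ge_two: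
  "2 \<le> k \<Longrightarrow> apow c n k =
     cspan (\<Union>i\<in>{1..<k}. {amult c n x y | x y. x \<in> apow c n i \<and> y \<in> apow c n (k - i)})"
  by (subst apow.simps) simp

subsection \<open>Linear algebra on coordinate vectors\<close>

definition cscale :: "complex \<Rightarrow> cvec \<Rightarrow> cvec" where
  "cscale r x = (\<lambda>k. r * x k)"

interpretation V: vector_space cscale
  by unfold_locales (auto simp: cscale_def fun_eq_iff algebra_simps)

lemma sum_fun_apply: "(\<Sum>a\<in>t. f a) k = (\<Sum>a\<in>t. f a k)"
  for f :: "'a \<Rightarrow> 'b \<Rightarrow> 'c::comm_monoid_add"
  by (induction t rule: infinite_finite_induct) auto

lemma cspan_eq_span: "cspan S = V.span S"
proof -
  have "(\<Sum>a\<in>t. cscale (r a) a) = (\<lambda>k. \<Sum>a\<in>t. r a * a k)" for t r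
    by (auto simp: fun_eq_iff sum_fun_apply cscale_def)
  then show ?thesis
    unfolding cspan_def V.span_explicit by auto
qed

lemma subspace_vecs: "V.subspace (vecs n)"
  unfolding V.subspace_def vecs_def cscale_def by auto

definition unit_vec :: "nat \<Rightarrow> cvec" where
  "unit_vec k = (\<lambda>j. if j = k then 1 else 0)"

lemma unit_vec_in_vecs: "1 \<le> k \<Longrightarrow> k \<le> n \<Longrightarrow> unit_vec k \<in> vecs n"
  by (auto simp: unit_vec_def vecs_def)

lemma vecs_subset_span_unit_vecs: "vecs n \<subseteq> V.span (unit_vec ` {1..n})"
proof
  fix x assume x: "x \<in> vecs n"
  have "x = (\<Sum>k\<in>{1..n}. cscale (x k) (unit_vec k))"
  proof
    fix j
    have "(\<Sum>k\<in>{1..n}. cscale (x k) (unit_vec k)) j = (\<Sum>k\<in>{1..n}. x k * unit_vec k j)"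
      by (simp add: sum_fun_apply cscale_def)
    also have "\<dots> = (\<Sum>k\<in>{1..n}. if j = k then x j else 0)"
      by (rule sum.cong) (auto simp: unit_vec_def)
    also have "\<dots> = x j"
      using x by (auto simp: vecs_def)
    finally show "x j = (\<Sum>k\<in>{1..n}. cscale (x k) (unit_vec k)) j" by simp
  qed
  also have "\<dots> \<in> V.span (unit_vec ` {1..n})"
    by (intro V.span_sum V.span_scale V.span_base) auto
  finally show "x \<in> V.span (unit_vec ` {1..n})" .
qed

lemma finite_if_independent_in_vecs: "B \<subseteq> vecs n \<Longrightarrow> V.independent B \<Longrightarrow> finite B"
  using V.independent_span_bound[of "unit_vec ` {1..n}" B] vecs_subset_span_unit_vecs by auto

lemma dim_vecs_subset_le: "S \<subseteq> vecs n \<Longrightarrow> V.dim S \<le> n"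
proof -
  assume "S \<subseteq> vecs n"
  then have "V.dim S \<le> card (unit_vec ` {1..n})"
    using vecs_subset_span_unit_vecs by (intro V.dim_le_card) auto
  also have "\<dots> \<le> n"
    using card_image_le[of "{1..n}" unit_vec] by simp
  finally show ?thesis .
qed

lemma dim_ge_one:
  assumes "S \<subseteq> vecs n" "V.subspace S" "S \<noteq> {0}"
  shows "1 \<le> V.dim S"
proof (rule ccontr)
  assume dim0: "\<not> 1 \<le> V.dim S"
  obtain B where B: "B \<subseteq> S" "V.independent B" "S \<subseteq> V.span B" "card B = V.dim S"
    by (rule V.basis_exists)
  have "finite B"
    using finite_if_independent_in_vecs[of B n] B assms(1) by blast
  moreover have "card B = 0"
    using B(4) dim0 by simp
  ultimately have "B = {}"
    by simp
  then have "S \<subseteq> {0}"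
    using B(3) by simp
  then show False
    using assms(2,3) V.subspace_0 by blast
qed

lemma dim_strict_mono:
  assumes "S \<subset> T" "T \<subseteq> vecs n" "V.subspace S"
  shows "V.dim S < V.dim T"
proof -
  obtain B where B: "B \<subseteq> S" "V.independent B" "S \<subseteq> V.span B" "card B = V.dim S"
    by (rule V.basis_exists)
  obtain w where w: "w \<in> T" "w \<notin> S"
    using assms(1) by (auto simp: psubset_eq)
  have "w \<notin> V.span B"
    using V.span_minimal[OF B(1) assms(3)] w(2) by blast
  then have indep: "V.independent (insert w B)"
    by (rule V.independent_insertI[OF _ B(2)])
  have sub: "insert w B \<subseteq> T"
    using B(1) w(1) assms(1) by blast
  obtain C where C: "insert w B \<subseteq> C" "C \<subseteq> T" "V.independent C" "T \<subseteq> V.span C"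
    by (rule V.maximal_independent_subset_extend[OF sub indep])
  have "finite C"
    using finite_if_independent_in_vecs[of C n] C(2,3) assms(2) by blast
  then have "card (insert w B) \<le> card C"
    using C(1) by (rule card_mono)
  moreover have "finite B"
    using C(1) \<open>finite C\<close> by (meson finite_subset subset_insertI subset_trans)
  moreover have "w \<notin> B"
    using B(1) w(2) by blast
  ultimately have "Suc (card B) \<le> card C"
    by simp
  then show ?thesis
    using B(4) V.basis_card_eq_dim[OF C(2) C(4) C(3)] by simp
qed

lemma dim_add_two_if_not_codim_one:
  assumes "T \<subseteq> S" "S \<subseteq> vecs n" "V.subspace S" "V.subspace T"
    and no_codim_one: "\<And>w. w \<in> S \<Longrightarrow> \<not> S \<subseteq> V.span (insert w T)"
  shows "V.dim T + 2 \<le> V.dim S"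
proof -
  have "\<not> S \<subseteq> T"
    using no_codim_one[of 0] assms(3,4) V.subspace_0 V.span_eq_iff by (metis insert_absorb)
  then obtain w where w: "w \<in> S" "w \<notin> T" by blast
  define U where "U = V.span (insert w T)"
  have "T \<subset> U"
    using w(2) V.span_superset[of "insert w T"] unfolding U_def by blast
  moreover have "U \<subset> S"
    using no_codim_one[OF w(1)] V.span_minimal[of "insert w T" S] assms(1,3) w(1)
    unfolding U_def by blast
  ultimately show ?thesis
    using dim_strict_mono[of T U n] dim_strict_mono[of U S n] assms(2,4)
    unfolding U_def by fastforce
qed

subsection \<open>Powers of an algebra\<close>

lemma amult_in_vecs: "amult c n x y \<in> vecs n"
  unfolding vecs_def amult_def by auto

lemma amult_add_left: "amult c n (x + y) z = amult c n x z + amult c n y z"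
  by (auto simp: amult_def fun_eq_iff algebra_simps sum.distrib)

lemma amult_add_right: "amult c n z (x + y) = amult c n z x + amult c n z y"
  by (auto simp: amult_def fun_eq_iff algebra_simps sum.distrib)

lemma amult_scale_left: "amult c n (cscale a x) z = cscale a (amult c n x z)"
  by (auto simp: amult_def cscale_def fun_eq_iff algebra_simps sum_distrib_left)

lemma amult_scale_right: "amult c n z (cscale a x) = cscale a (amult c n z x)"
  by (auto simp: amult_def cscale_def fun_eq_iff algebra_simps sum_distrib_left)

lemma amult_self_eq_zero: "anticomm c n \<Longrightarrow> w \<in> vecs n \<Longrightarrow> amult c n w w = 0"
  unfolding anticomm_def by (fastforce simp: fun_eq_iff)

lemma subspace_apow: "V.subspace (apow c n k)"
  by (cases "k \<le> 1") (auto simp: apow_le_one apow_ge_two subspace_vecs cspan_eq_span)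

lemma apow_subset_vecs: "apow c n k \<subseteq> vecs n"
proof (cases "k \<le> 1")
  case False
  then show ?thesis
    by (simp add: apow_ge_two cspan_eq_span)
      (intro V.span_minimal subspace_vecs, auto simp: amult_in_vecs)
qed (simp add: apow_le_one)

lemma zero_in_apow: "0 \<in> apow c n k"
  using subspace_apow V.subspace_0 by blast

lemma amult_in_apow:
  assumes "x \<in> apow c n i" "y \<in> apow c n j" "1 \<le> i" "1 \<le> j"
  shows "amult c n x y \<in> apow c n (i + j)"
proof -
  have "amult c n x y \<in> (\<Union>l\<in>{1..<i + j}. {amult c n x y | x y. x \<in> apow c n l \<and> y \<in> apow c n (i + j - l)})"
    using assms by (intro UN_I[of i]) auto
  then show ?thesis
    by (subst apow_ge_two) (use assms in \<open>auto simp: cspan_eq_span intro: V.span_base\<close>)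
qed

lemma apow_subsetI:
  assumes "2 \<le> k" "V.subspace S"
    and "\<And>i x y. 1 \<le> i \<Longrightarrow> i < k \<Longrightarrow> x \<in> apow c n i \<Longrightarrow> y \<in> apow c n (k - i) \<Longrightarrow> amult c n x y \<in> S"
  shows "apow c n k \<subseteq> S"
  unfolding apow_ge_two[OF assms(1)] cspan_eq_span
  by (rule V.span_minimal) (use assms in fastforce)+

lemma apow_Suc_subset: "1 \<le> k \<Longrightarrow> apow c n (Suc k) \<subseteq> apow c n k"
proof (induction k rule: less_induct)
  case (less k)
  show ?case
  proof (cases "k = 1")
    case True
    then show ?thesis using apow_subset_vecs by (simp add: apow_le_one)
  next
    case False
    show ?thesis
    proof (rule apow_subsetI[OF _ subspace_apow])
      fix i x y assume i: "1 \<le> i" "i < Suc k" and x: "x \<in> apow c n i" and y: "y \<in> apow c n (Suc k - i)"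
      show "amult c n x y \<in> apow c n k"
      proof (cases "i = 1")
        case True
        have "apow c n (Suc (k - 1)) \<subseteq> apow c n (k - 1)"
          using less.IH[of "k - 1"] less.prems False by simp
        then have "y \<in> apow c n (k - 1)"
          using y True less.prems by auto
        then show ?thesis
          using amult_in_apow[OF x] True less.prems False by force
      next
        case False
        have "apow c n (Suc (i - 1)) \<subseteq> apow c n (i - 1)"
          using less.IH[of "i - 1"] i False by simp
        then have "x \<in> apow c n (i - 1)"
          using x i False by auto
        then show ?thesis
          using amult_in_apow[OF _ y] i False by force
      qed
    qed (use less.prems False in simp)
  qed
qed

lemma apow_antimono:
  assumes "1 \<le> i" "i \<le> j"
  shows "apow c n j \<subseteq> apow c n i"
  using assms(2)
proof (induction j rule: dec_induct)
  case (step j)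
  then show ?case
    using apow_Suc_subset[of j c n] assms(1) by auto
qed simp

lemma apow_eq_zero_mono: "1 \<le> i \<Longrightarrow> i \<le> k \<Longrightarrow> apow c n i = {0} \<Longrightarrow> apow c n k = {0}"
  using apow_antimono[of i k c n] zero_in_apow[of c n k] by blast

lemma dim_apow_le: "V.dim (apow c n k) \<le> n"
  using dim_vecs_subset_le apow_subset_vecs by blast

subsection \<open>Vanishing of powers\<close>

lemma apow_stable_if_products_absorbed:
  assumes "2 \<le> B"
    and absorbed: "\<And>i j x y. 1 \<le> i \<Longrightarrow> 1 \<le> j \<Longrightarrow> i < B \<Longrightarrow> j < B \<Longrightarrow> B \<le> i + j \<Longrightarrow>
        apow c n (Suc i) \<noteq> apow c n i \<Longrightarrow> apow c n (Suc j) \<noteq> apow c n j \<Longrightarrow>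
        x \<in> apow c n i \<Longrightarrow> y \<in> apow c n j \<Longrightarrow> amult c n x y \<in> apow c n (Suc (i + j))"
  shows "B \<le> K \<Longrightarrow> apow c n (Suc K) = apow c n K"
proof (induction K rule: less_induct)
  case (less K)
  have "apow c n K \<subseteq> apow c n (Suc K)"
  proof (rule apow_subsetI[OF _ subspace_apow])
    fix i x y assume i: "1 \<le> i" "i < K" and x: "x \<in> apow c n i" and y: "y \<in> apow c n (K - i)"
    have K: "i + (K - i) = K" "1 \<le> K - i"
      using i by auto
    consider "apow c n (Suc i) = apow c n i" | "apow c n (Suc (K - i)) = apow c n (K - i)"
      | "apow c n (Suc i) \<noteq> apow c n i" "apow c n (Suc (K - i)) \<noteq> apow c n (K - i)"
      by blast
    then show "amult c n x y \<in> apow c n (Suc K)"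
    proof cases
      case 1
      then show ?thesis using amult_in_apow[of x c n "Suc i" y "K - i"] x y K by auto
    next
      case 2
      then show ?thesis using amult_in_apow[of x c n i y "Suc (K - i)"] x y K i by auto
    next
      case 3
      have "K - i < K"
        using i by simp
      then have "i < B" "K - i < B"
        using less.IH[of i] less.IH[of "K - i"] i 3 by (meson not_le)+
      then show ?thesis
        using absorbed[OF i(1) K(2) _ _ _ 3 x y] less.prems K by simp
    qed
  qed (use less.prems assms(1) in simp)
  then show ?case
    using apow_Suc_subset[of K c n] less.prems assms(1) by auto
qed

lemma apow_eq_zero_if_products_absorbed:
  assumes nil: "nilpotent_alg c n" and "2 \<le> B"
    and absorbed: "\<And>i j x y. 1 \<le> i \<Longrightarrow> 1 \<le> j \<Longrightarrow> i < B \<Longrightarrow> j < B \<Longrightarrow> B \<le> i + j \<Longrightarrow>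
        apow c n (Suc i) \<noteq> apow c n i \<Longrightarrow> apow c n (Suc j) \<noteq> apow c n j \<Longrightarrow>
        x \<in> apow c n i \<Longrightarrow> y \<in> apow c n j \<Longrightarrow> amult c n x y \<in> apow c n (Suc (i + j))"
  shows "apow c n B = {0}"
proof -
  obtain K where K: "1 \<le> K" "apow c n K = {0}"
    using nil unfolding nilpotent_alg_def zero_fun_def by auto
  have "apow c n K' = apow c n B" if "B \<le> K'" for K'
    using that
  proof (induction K' rule: dec_induct)
    case (step K')
    then show ?case
      using apow_stable_if_products_absorbed[OF \<open>2 \<le> B\<close> absorbed, of K'] by simp
  qed simp
  then have "apow c n B \<subseteq> apow c n K"
    using apow_antimono[of K "max K B" c n] K(1) by (metis max.cobounded1 max.cobounded2)
  then show ?thesis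
    using K(2) zero_in_apow by blast
qed

lemma apow_last_change:
  assumes "1 \<le> k"
  obtains s where "s < k" "\<And>j. s < j \<Longrightarrow> j \<le> k \<Longrightarrow> apow c n j = apow c n k"
    "1 \<le> s \<Longrightarrow> apow c n k \<subset> apow c n s"
proof -
  define S where "S = {j. 1 \<le> j \<and> j < k \<and> apow c n j \<noteq> apow c n k}"
  define s where "s = (if S = {} then 0 else Max S)"
  have "finite S"
    unfolding S_def by auto
  have "s < k"
    using Max_in[OF \<open>finite S\<close>] assms unfolding s_def S_def by auto
  moreover have "apow c n j = apow c n k" if "s < j" "j \<le> k" for j
  proof (rule ccontr)
    assume "apow c n j \<noteq> apow c n k"
    then have "j \<in> S"
      using that unfolding S_def by auto
    then have "j \<le> s"
      using Max_ge[OF \<open>finite S\<close>] unfolding s_def by auto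
    then show False
      using that by simp
  qed
  moreover have "apow c n k \<subset> apow c n s" if "1 \<le> s"
  proof -
    have "s \<in> S"
      using that Max_in[OF \<open>finite S\<close>] unfolding s_def by (auto split: if_splits)
    then show ?thesis
      using apow_antimono[of s k c n] unfolding S_def by auto
  qed
  ultimately show ?thesis
    using that by blast
qed

lemma square_absorbed_if_codim_one:
  assumes ac: "anticomm c n" and "1 \<le> s" and w: "w \<in> apow c n s"
    and codim_one: "apow c n s \<subseteq> V.span (insert w (apow c n (Suc s)))"
    and x: "x \<in> apow c n s" and y: "y \<in> apow c n s"
  shows "amult c n x y \<in> apow c n (Suc (s + s))"
proof -
  have span_Suc: "V.span (apow c n (Suc s)) = apow c n (Suc s)"
    using subspace_apow by simp
  obtain a where a: "x - cscale a w \<in> apow c n (Suc s)"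
    using codim_one x span_Suc by (auto simp: V.span_insert)
  obtain b where b: "y - cscale b w \<in> apow c n (Suc s)"
    using codim_one y span_Suc by (auto simp: V.span_insert)
  define u v where "u = x - cscale a w" and "v = y - cscale b w"
  have u: "u \<in> apow c n (Suc s)" "x = u + cscale a w" and v: "v \<in> apow c n (Suc s)" "y = v + cscale b w"
    using a b by (simp_all add: u_def v_def)
  have "amult c n w y = amult c n w v + cscale b (amult c n w w)"
    by (simp add: v(2) amult_add_right amult_scale_right)
  also have "\<dots> = amult c n w v"
  proof -
    have "w \<in> vecs n"
      using w apow_subset_vecs by blast
    then show ?thesis
      using amult_self_eq_zero[OF ac] by (simp add: cscale_def zero_fun_def)
  qed
  finally have xy: "amult c n x y = amult c n u y + cscale a (amult c n w v)"
    by (simp add: u(2) amult_add_left amult_scale_left)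
  have "amult c n u y \<in> apow c n (Suc (s + s))"
    using amult_in_apow[OF u(1) y] \<open>1 \<le> s\<close> by simp
  moreover have "amult c n w v \<in> apow c n (Suc (s + s))"
    using amult_in_apow[OF w v(1)] \<open>1 \<le> s\<close> by simp
  ultimately show ?thesis
    unfolding xy using subspace_apow V.subspace_add V.subspace_scale by blast
qed

lemma index_le_twice_last_change:
  assumes nil: "nilpotent_alg c n" and nz: "apow c n k \<noteq> {0}" and "1 \<le> s" "s < k"
    and after_s: "\<And>j. s < j \<Longrightarrow> j \<le> k \<Longrightarrow> apow c n j = apow c n k"
  shows "k \<le> 2 * s"
proof (rule ccontr)
  assume "\<not> k \<le> 2 * s"
  have dropping: "i \<le> s" if "i < Suc (s + s)" "apow c n (Suc i) \<noteq> apow c n i" for i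
  proof (rule ccontr)
    assume "\<not> i \<le> s"
    then show False
      using that after_s[of i] after_s[of "Suc i"] \<open>\<not> k \<le> 2 * s\<close> by simp
  qed
  have "apow c n (Suc (s + s)) = {0}"
  proof (rule apow_eq_zero_if_products_absorbed[OF nil])
    fix i j x y assume "i < Suc (s + s)" "j < Suc (s + s)" "Suc (s + s) \<le> i + j"
      "apow c n (Suc i) \<noteq> apow c n i" "apow c n (Suc j) \<noteq> apow c n j"
    then show "amult c n x y \<in> apow c n (Suc (i + j))"
      using dropping[of i] dropping[of j] by linarith
  qed (use \<open>1 \<le> s\<close> in simp)
  then show False
    using apow_eq_zero_mono[of "Suc (s + s)" k c n] \<open>\<not> k \<le> 2 * s\<close> nz by simp
qed

lemma index_le_sum_of_last_changes:
  assumes nil: "nilpotent_alg c n" and ac: "anticomm c n" and nz: "apow c n k \<noteq> {0}"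
    and "1 \<le> s" "s < k" and after_s: "\<And>j. s < j \<Longrightarrow> j \<le> k \<Longrightarrow> apow c n j = apow c n k"
    and "p < s" and after_p: "\<And>j. p < j \<Longrightarrow> j \<le> s \<Longrightarrow> apow c n j = apow c n s"
    and w: "w \<in> apow c n s" and codim_one: "apow c n s \<subseteq> V.span (insert w (apow c n (Suc s)))"
  shows "k \<le> s + p"
proof (rule ccontr)
  assume "\<not> k \<le> s + p"
  have dropping: "i \<le> p \<or> i = s"
    if "i < Suc (s + p)" "apow c n (Suc i) \<noteq> apow c n i" for i
  proof (rule ccontr)
    assume "\<not> (i \<le> p \<or> i = s)"
    then consider "p < i" "i < s" | "s < i"
      by linarith
    then show False
    proof cases
      case 1
      then show False
        using that(2) after_p[of i] after_p[of "Suc i"] by simp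
    next
      case 2
      then show False
        using that after_s[of i] after_s[of "Suc i"] \<open>\<not> k \<le> s + p\<close> by simp
    qed
  qed
  have "apow c n (Suc (s + p)) = {0}"
  proof (rule apow_eq_zero_if_products_absorbed[OF nil])
    fix i j x y assume ij: "1 \<le> i" "1 \<le> j" "i < Suc (s + p)" "j < Suc (s + p)" "Suc (s + p) \<le> i + j"
      "apow c n (Suc i) \<noteq> apow c n i" "apow c n (Suc j) \<noteq> apow c n j"
      and "x \<in> apow c n i" "y \<in> apow c n j"
    moreover have "i = s \<and> j = s"
      using dropping[of i] dropping[of j] ij \<open>p < s\<close> by fastforce
    ultimately show "amult c n x y \<in> apow c n (Suc (i + j))"
      using square_absorbed_if_codim_one[OF ac \<open>1 \<le> s\<close> w codim_one] by simp
  qed (use \<open>1 \<le> s\<close> in simp)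
  then show False
    using apow_eq_zero_mono[of "Suc (s + p)" k c n] \<open>\<not> k \<le> s + p\<close> nz by simp
qed

subsection \<open>The upper bound\<close>

lemma twice_fib_le: "2 * fib m \<le> fib (m + 2)"
  using fib_plus_2[of m] fib_Suc_mono[of m] by simp

lemma apow_two_eq_zero_if_stable:
  assumes nil: "nilpotent_alg c n" and "apow c n 2 = apow c n 1"
  shows "apow c n 2 = {0}"
proof (rule apow_eq_zero_if_products_absorbed[OF nil])
  fix i j x y assume "1 \<le> i" "i < 2" "apow c n (Suc i) \<noteq> apow c n i"
  moreover from this have "i = 1"
    by simp
  ultimately show "amult c n x y \<in> apow c n (Suc (i + j))"
    using assms(2) by (simp add: numeral_2_eq_2)
qed simp

lemma index_le_fib_if_codim_one:
  assumes nil: "nilpotent_alg c n" and ac: "anticomm c n" and nz: "apow c n k \<noteq> {0}"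
    and "1 \<le> s" "s < k" and after_s: "\<And>j. s < j \<Longrightarrow> j \<le> k \<Longrightarrow> apow c n j = apow c n k"
    and drop_s: "apow c n k \<subset> apow c n s"
    and w: "w \<in> apow c n s" and codim_one: "apow c n s \<subseteq> V.span (insert w (apow c n (Suc s)))"
    and bound: "\<And>j. 1 \<le> j \<Longrightarrow> j \<le> s \<Longrightarrow> apow c n j \<noteq> {0} \<Longrightarrow> j \<le> fib (n - V.dim (apow c n j) + 1)"
  shows "k \<le> fib (n - V.dim (apow c n k) + 1)"
proof -
  let ?N = "apow c n" and ?d = "\<lambda>j. V.dim (apow c n j)"
  obtain p where p: "p < s" and after_p: "\<And>j. p < j \<Longrightarrow> j \<le> s \<Longrightarrow> ?N j = ?N s"
    and drop_p: "1 \<le> p \<Longrightarrow> ?N s \<subset> ?N p"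
    using apow_last_change[OF \<open>1 \<le> s\<close>] by blast
  have "?N s \<noteq> {0}"
    using drop_s nz zero_in_apow[of c n k] by blast
  have "p \<le> fib (n - ?d s)"
  proof (cases "1 \<le> p")
    case True
    have "?N p \<noteq> {0}"
      using drop_p[OF True] \<open>?N s \<noteq> {0}\<close> zero_in_apow[of c n s] by blast
    then have "p \<le> fib (n - ?d p + 1)"
      using bound True p by simp
    also have "\<dots> \<le> fib (n - ?d s)"
      using dim_strict_mono[OF drop_p[OF True] apow_subset_vecs subspace_apow] dim_apow_le[of c n p]
      by (intro fib_mono) simp
    finally show ?thesis .
  qed simp
  moreover have "k \<le> s + p"
    by (rule index_le_sum_of_last_changes[OF nil ac nz \<open>1 \<le> s\<close> \<open>s < k\<close> after_s p after_p w codim_one])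
  ultimately have "k \<le> fib (n - ?d s + 1) + fib (n - ?d s)"
    using bound[OF \<open>1 \<le> s\<close> order_refl \<open>?N s \<noteq> {0}\<close>] by simp
  also have "\<dots> = fib (n - ?d s + 2)"
    by (simp add: fib_plus_2)
  also have "\<dots> \<le> fib (n - ?d k + 1)"
    using dim_strict_mono[OF drop_s apow_subset_vecs subspace_apow] dim_apow_le[of c n s]
    by (intro fib_mono) simp
  finally show ?thesis .
qed

lemma index_le_fib_if_not_codim_one:
  assumes nil: "nilpotent_alg c n" and nz: "apow c n k \<noteq> {0}"
    and "1 \<le> s" "s < k" and after_s: "\<And>j. s < j \<Longrightarrow> j \<le> k \<Longrightarrow> apow c n j = apow c n k"
    and no_codim_one: "\<And>w. w \<in> apow c n s \<Longrightarrow> \<not> apow c n s \<subseteq> V.span (insert w (apow c n (Suc s)))"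
    and bound: "s \<le> fib (n - V.dim (apow c n s) + 1)"
  shows "k \<le> fib (n - V.dim (apow c n k) + 1)"
proof -
  let ?N = "apow c n" and ?d = "\<lambda>j. V.dim (apow c n j)"
  have "?N (Suc s) = ?N k"
    using after_s[of "Suc s"] \<open>s < k\<close> by simp
  moreover have "?d (Suc s) + 2 \<le> ?d s"
    by (rule dim_add_two_if_not_codim_one[OF apow_Suc_subset[OF \<open>1 \<le> s\<close>] apow_subset_vecs
          subspace_apow subspace_apow no_codim_one])
  ultimately have "?d k + 2 \<le> ?d s"
    by simp
  have "k \<le> 2 * fib (n - ?d s + 1)"
    using index_le_twice_last_change[OF nil nz \<open>1 \<le> s\<close> \<open>s < k\<close> after_s] bound by simp
  also have "\<dots> \<le> fib (n - ?d s + 1 + 2)"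
    by (rule twice_fib_le)
  also have "\<dots> \<le> fib (n - ?d k + 1)"
    using \<open>?d k + 2 \<le> ?d s\<close> dim_apow_le[of c n s] by (intro fib_mono) linarith
  finally show ?thesis .
qed

lemma index_le_fib_codim:
  assumes nil: "nilpotent_alg c n" and ac: "anticomm c n"
  shows "1 \<le> k \<Longrightarrow> apow c n k \<noteq> {0} \<Longrightarrow> k \<le> fib (n - V.dim (apow c n k) + 1)"
proof (induction k rule: less_induct)
  case (less k)
  show ?case
  proof (cases "k = 1")
    case True
    then show ?thesis
      using fib_neq_0_nat[of "n - V.dim (apow c n k) + 1"] by simp
  next
    case False
    obtain s where "s < k" and after_s: "\<And>j. s < j \<Longrightarrow> j \<le> k \<Longrightarrow> apow c n j = apow c n k"
      and drop_s: "1 \<le> s \<Longrightarrow> apow c n k \<subset> apow c n s"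
      using apow_last_change[OF less.prems(1)] by blast
    have "1 \<le> s"
    proof (rule ccontr)
      assume "\<not> 1 \<le> s"
      then have "apow c n 2 = apow c n 1"
        using after_s[of 1] after_s[of 2] False less.prems(1) by simp
      then show False
        using apow_eq_zero_mono[OF _ _ apow_two_eq_zero_if_stable[OF nil], of k] False less.prems by simp
    qed
    have bound: "j \<le> fib (n - V.dim (apow c n j) + 1)"
      if "1 \<le> j" "j \<le> s" "apow c n j \<noteq> {0}" for j
      using less.IH[OF _ that(1,3)] that(2) \<open>s < k\<close> by simp
    show ?thesis
    proof (cases "\<exists>w\<in>apow c n s. apow c n s \<subseteq> V.span (insert w (apow c n (Suc s)))")
      case True
      then show ?thesis
        using index_le_fib_if_codim_one[OF nil ac less.prems(2) \<open>1 \<le> s\<close> \<open>s < k\<close> after_s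
            drop_s[OF \<open>1 \<le> s\<close>] _ _ bound] by blast
    next
      case False
      have "apow c n s \<noteq> {0}"
        using drop_s[OF \<open>1 \<le> s\<close>] less.prems(2) zero_in_apow[of c n k] by blast
      then show ?thesis
        using False index_le_fib_if_not_codim_one[OF nil less.prems(2) \<open>1 \<le> s\<close> \<open>s < k\<close> after_s _
            bound[OF \<open>1 \<le> s\<close> order_refl]] by blast
    qed
  qed
qed

lemma nil_index_spec: "nilpotent_alg c n \<Longrightarrow> 1 \<le> nil_index c n \<and> apow c n (nil_index c n) = {0}"
  unfolding nilpotent_alg_def nil_index_def zero_fun_def by (rule LeastI_ex) simp

lemma apow_nonzero_below_nil_index:
  "1 \<le> k \<Longrightarrow> k < nil_index c n \<Longrightarrow> apow c n k \<noteq> {0}"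
  unfolding nil_index_def zero_fun_def using not_less_Least by blast

lemma nil_index_le_fib:
  assumes "1 \<le> n" and ac: "anticomm c n" and nil: "nilpotent_alg c n"
  shows "nil_index c n \<le> fib n + 1"
proof -
  define m where "m = nil_index c n"
  have m: "1 \<le> m" "apow c n m = {0}"
    using nil_index_spec[OF nil] unfolding m_def by auto
  have "unit_vec 1 \<in> apow c n 1" "unit_vec 1 \<noteq> 0"
    using unit_vec_in_vecs[of 1 n] \<open>1 \<le> n\<close> by (auto simp: apow_le_one unit_vec_def fun_eq_iff)
  then have "m \<noteq> 1"
    using m(2) by auto
  then have "2 \<le> m"
    using m(1) by simp
  then have nz: "apow c n (m - 1) \<noteq> {0}"
    using apow_nonzero_below_nil_index[of "m - 1"] unfolding m_def by simp
  have "m - 1 \<le> fib (n - V.dim (apow c n (m - 1)) + 1)"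
    using index_le_fib_codim[OF nil ac _ nz] \<open>2 \<le> m\<close> by simp
  also have "\<dots> \<le> fib n"
    using dim_ge_one[OF apow_subset_vecs subspace_apow nz] \<open>1 \<le> n\<close> by (intro fib_mono) simp
  finally show ?thesis
    unfolding m_def by simp
qed

subsection \<open>Sharpness\<close>

definition strictly_triangular :: "sconst \<Rightarrow> nat \<Rightarrow> bool" where
  "strictly_triangular c n \<longleftrightarrow>
     (\<forall>i\<in>{1..n}. \<forall>j\<in>{1..n}. \<forall>k\<in>{1..n}. k \<le> max i j \<longrightarrow> c i j k = 0)"

definition successor_chain :: "sconst \<Rightarrow> nat \<Rightarrow> bool" where
  "successor_chain c n \<longleftrightarrow>
     (\<forall>i. 1 \<le> i \<and> i \<le> n - 2 \<longrightarrow> (\<forall>k\<in>{1..n}. c i (i + 1) k = (if k = i + 2 then 1 else 0)))"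

lemma amult_eq_zeroI:
  "(\<And>a b. m \<in> {1..n} \<Longrightarrow> a \<in> {1..n} \<Longrightarrow> b \<in> {1..n} \<Longrightarrow> x a * y b * c a b m = 0) \<Longrightarrow>
    amult c n x y m = 0"
  unfolding amult_def by (simp del: mult_eq_0_iff add: sum.neutral)

lemma apow_vanishes_low:
  assumes tri: "strictly_triangular c n"
  shows "2 ^ h \<le> k \<Longrightarrow> x \<in> apow c n k \<Longrightarrow> j \<le> h \<Longrightarrow> x j = 0"
proof (induction h arbitrary: k x j)
  case 0
  then show ?case
    using apow_subset_vecs unfolding vecs_def by fastforce
next
  case (Suc h)
  define S where "S = {x::cvec. \<forall>j\<le>Suc h. x j = 0}"
  have "2 \<le> k"
    using Suc.prems(1) self_le_power[of "2::nat" "Suc h"] by linarith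
  have "apow c n k \<subseteq> S"
  proof (rule apow_subsetI[OF \<open>2 \<le> k\<close>])
    show "V.subspace S"
      unfolding S_def V.subspace_def cscale_def by auto
    fix i x y assume "1 \<le> i" "i < k" and x: "x \<in> apow c n i" and y: "y \<in> apow c n (k - i)"
    have low: "(\<forall>j\<le>h. x j = 0) \<or> (\<forall>j\<le>h. y j = 0)"
      using Suc.prems(1) Suc.IH[OF _ x] Suc.IH[OF _ y] by fastforce
    have "amult c n x y m = 0" if "m \<le> Suc h" for m
    proof (rule amult_eq_zeroI)
      fix a b assume "m \<in> {1..n}" "a \<in> {1..n}" "b \<in> {1..n}"
      then show "x a * y b * c a b m = 0"
        using tri low that unfolding strictly_triangular_def
        by (cases "m \<le> max a b") auto
    qed
    then show "amult c n x y \<in> S"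
      unfolding S_def by blast
  qed
  then show ?case
    using Suc.prems unfolding S_def by auto
qed

lemma nilpotent_if_strictly_triangular:
  assumes "strictly_triangular c n"
  shows "nilpotent_alg c n"
proof -
  have "x = 0" if "x \<in> apow c n (2 ^ n)" for x
  proof
    fix j
    show "x j = 0 j"
      using apow_vanishes_low[OF assms order_refl that, of j] that apow_subset_vecs[of c n "2 ^ n"]
      unfolding vecs_def by (cases "j \<le> n") auto
  qed
  then have "apow c n (2 ^ n) = {0}"
    using zero_in_apow by blast
  then show ?thesis
    unfolding nilpotent_alg_def zero_fun_def by (intro exI[of _ "2 ^ n"]) simp
qed

lemma double_sum_single:
  assumes "A \<in> I" "B \<in> J" "finite I" "finite J"
    and "\<And>a b. a \<in> I \<Longrightarrow> b \<in> J \<Longrightarrow> f a b = (if a = A \<and> b = B then C else 0)"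
  shows "(\<Sum>a\<in>I. \<Sum>b\<in>J. f a b) = (C :: 'a :: comm_monoid_add)"
proof -
  have "(\<Sum>b\<in>J. f a b) = (if a = A then C else 0)" if "a \<in> I" for a
  proof -
    have "(\<Sum>b\<in>J. f a b) = (\<Sum>b\<in>J. if a = A \<and> b = B then C else 0)"
      using assms(5) that by (intro sum.cong) simp_all
    also have "\<dots> = (if a = A then C else 0)"
      using assms(2,4) by (cases "a = A") (simp_all add: sum.delta')
    finally show ?thesis .
  qed
  then have "(\<Sum>a\<in>I. \<Sum>b\<in>J. f a b) = (\<Sum>a\<in>I. if a = A then C else 0)"
    by (rule sum.cong[OF refl])
  also have "\<dots> = C"
    using assms(1,3) by (simp add: sum.delta')
  finally show ?thesis .
qed

lemma amult_unit_vec: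
  assumes "i \<in> {1..n}" "j \<in> {1..n}" "k \<in> {1..n}"
  shows "amult c n (unit_vec i) (unit_vec j) k = c i j k"
proof -
  have "amult c n (unit_vec i) (unit_vec j) k
      = (\<Sum>a\<in>{1..n}. \<Sum>b\<in>{1..n}. unit_vec i a * unit_vec j b * c a b k)"
    using assms(3) by (simp add: amult_def)
  also have "\<dots> = c i j k"
    by (rule double_sum_single[OF assms(1,2)]) (auto simp: unit_vec_def)
  finally show ?thesis .
qed

lemma anticomm_diag_zero:
  assumes "anticomm c n" "i \<in> {1..n}" "k \<in> {1..n}"
  shows "c i i k = 0"
  using amult_self_eq_zero[OF assms(1) unit_vec_in_vecs, of i] amult_unit_vec[of i n i k c] assms
  by (auto simp: fun_eq_iff)

lemma amult_leading_terms:
  assumes ac: "anticomm c n" and tri: "strictly_triangular c n" and chain: "successor_chain c n"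
    and "1 \<le> i" "i + 2 \<le> n"
    and x: "x i = 1" "\<And>j. j < i \<Longrightarrow> x j = 0" and y: "y (i + 1) = 1" "\<And>j. j < i + 1 \<Longrightarrow> y j = 0"
  shows "amult c n x y (i + 2) = 1" "\<And>j. j < i + 2 \<Longrightarrow> amult c n x y j = 0"
proof -
  have coord: "amult c n x y m = (if m = i + 2 then 1 else 0)" if m: "m \<in> {1..i + 2}" for m
  proof -
    have mn: "m \<in> {1..n}"
      using m \<open>i + 2 \<le> n\<close> by auto
    have "amult c n x y m = (\<Sum>a\<in>{1..n}. \<Sum>b\<in>{1..n}. x a * y b * c a b m)"
      using mn by (simp add: amult_def)
    also have "\<dots> = c i (i + 1) m"
    proof (rule double_sum_single)
      fix a b assume ab: "a \<in> {1..n}" "b \<in> {1..n}"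
      have "x a * y b * c a b m = 0" if other: "\<not> (a = i \<and> b = i + 1)"
      proof (cases "a < i \<or> b < i + 1")
        case True
        then show ?thesis
          using x(2) y(2) by auto
      next
        case high: False
        show ?thesis
        proof (cases "m \<le> max a b")
          case True
          then show ?thesis
            using tri ab mn unfolding strictly_triangular_def by auto
        next
          case False
          then have "a = b"
            using high other m by auto
          then show ?thesis
            using anticomm_diag_zero[OF ac ab(1) mn] by simp
        qed
      qed
      then show "x a * y b * c a b m = (if a = i \<and> b = i + 1 then c i (i + 1) m else 0)"
        using x y by auto
    qed (use \<open>1 \<le> i\<close> \<open>i + 2 \<le> n\<close> in auto)
    also have "\<dots> = (if m = i + 2 then 1 else 0)"
      using chain mn \<open>1 \<le> i\<close> \<open>i + 2 \<le> n\<close> unfolding successor_chain_def by simp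
    finally show ?thesis .
  qed
  show "amult c n x y (i + 2) = 1"
    using coord[of "i + 2"] by simp
  show "amult c n x y j = 0" if "j < i + 2" for j
    using coord[of j] that by (cases "j = 0") (auto simp: amult_def)
qed

lemma apow_fib_has_leading_term:
  assumes ac: "anticomm c n" and tri: "strictly_triangular c n" and chain: "successor_chain c n"
  shows "1 \<le> k \<Longrightarrow> k \<le> n \<Longrightarrow> \<exists>v\<in>apow c n (fib k). v k = 1 \<and> (\<forall>j<k. v j = 0)"
proof (induction k rule: less_induct)
  case (less k)
  show ?case
  proof (cases "k \<le> 2")
    case True
    then have "fib k = 1"
      using less.prems by (cases k) (auto simp: numeral_2_eq_2 le_Suc_eq)
    then show ?thesis
      using unit_vec_in_vecs[of k n] less.prems by (intro bexI[of _ "unit_vec k"]) (auto simp: apow_le_one unit_vec_def)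
  next
    case False
    define i where "i = k - 2"
    have i: "k = i + 2" "1 \<le> i"
      using False unfolding i_def by auto
    obtain x where x: "x \<in> apow c n (fib i)" "x i = 1" "\<forall>j<i. x j = 0"
      using less.IH[of i] i less.prems by auto
    obtain y where y: "y \<in> apow c n (fib (i + 1))" "y (i + 1) = 1" "\<forall>j<i + 1. y j = 0"
      using less.IH[of "i + 1"] i less.prems by auto
    have "amult c n x y \<in> apow c n (fib i + fib (i + 1))"
      using amult_in_apow[OF x(1) y(1)] fib_neq_0_nat[of i] fib_neq_0_nat[of "i + 1"] i
      by (simp add: Suc_le_eq)
    then have xy: "amult c n x y \<in> apow c n (fib k)"
      using i by (simp add: fib_plus_2 add.commute)
    have "i + 2 \<le> n"
      using i less.prems by simp
    note leading = amult_leading_terms[where x = x and y = y and i = i, OF ac tri chain i(2) this x(2) x(3)[rule_format] y(2) y(3)[rule_format]]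
    show ?thesis
      using leading i(1) by (intro bexI[OF _ xy]) simp
  qed
qed

lemma nil_index_eq_fib:
  assumes "1 \<le> n" and ac: "anticomm c n" and tri: "strictly_triangular c n"
    and chain: "successor_chain c n"
  shows "nilpotent_alg c n \<and> nil_index c n = fib n + 1"
proof -
  have nil: "nilpotent_alg c n"
    by (rule nilpotent_if_strictly_triangular[OF tri])
  obtain v where v: "v \<in> apow c n (fib n)" "v n = 1"
    using apow_fib_has_leading_term[OF ac tri chain \<open>1 \<le> n\<close> order_refl] by blast
  have "\<not> nil_index c n \<le> fib n"
  proof
    assume "nil_index c n \<le> fib n"
    then have "v \<in> apow c n (nil_index c n)"
      using apow_antimono[of "nil_index c n" "fib n" c n] nil_index_spec[OF nil] v(1) by auto
    then show False
      using nil_index_spec[OF nil] v(2) by simp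
  qed
  then show ?thesis
    using nil nil_index_le_fib[OF \<open>1 \<le> n\<close> ac nil] by simp
qed

definition chain_alg :: sconst where
  "chain_alg i j k = (if j = i + 1 \<and> k = i + 2 then 1 else if i = j + 1 \<and> k = j + 2 then -1 else 0)"

lemma anticomm_chain_alg: "anticomm chain_alg n"
  unfolding anticomm_def
proof (intro ballI ext)
  fix x y :: cvec and k
  have "(\<Sum>i\<in>{1..n}. \<Sum>j\<in>{1..n}. y i * x j * chain_alg i j k)
      = (\<Sum>j\<in>{1..n}. \<Sum>i\<in>{1..n}. - (x j * y i * chain_alg j i k))"
    by (subst sum.swap) (auto simp: chain_alg_def intro!: sum.cong)
  then show "amult chain_alg n x y k = - amult chain_alg n y x k"
    by (simp add: amult_def sum_negf)
qed

theorem mainTheorem4: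
  shows "(\<forall>n\<ge>1. \<forall>c. anticomm c n \<and> nilpotent_alg c n \<longrightarrow> nil_index c n \<le> fib n + 1)
       \<and> (\<forall>n\<ge>1. \<exists>c. anticomm c n \<and> nilpotent_alg c n \<and> nil_index c n = fib n + 1)
       \<and> (\<forall>n\<ge>6. \<forall>c. in_T n c \<longrightarrow> nilpotent_alg c n \<and> nil_index c n = fib n + 1)"
proof (intro conjI allI impI)
  fix n c assume "1 \<le> n" "anticomm c n \<and> nilpotent_alg c n"
  then show "nil_index c n \<le> fib n + 1"
    using nil_index_le_fib by blast
next
  fix n :: nat assume "1 \<le> n"
  moreover have "strictly_triangular chain_alg n" "successor_chain chain_alg n"
    unfolding strictly_triangular_def successor_chain_def chain_alg_def by auto
  ultimately show "\<exists>c. anticomm c n \<and> nilpotent_alg c n \<and> nil_index c n = fib n + 1"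
    using nil_index_eq_fib anticomm_chain_alg by blast
next
  fix n c assume "6 \<le> n" "in_T n c"
  then have "1 \<le> n" "anticomm c n" "strictly_triangular c n" "successor_chain c n"
    unfolding in_T_def strictly_triangular_def successor_chain_def by auto
  then show "nilpotent_alg c n" "nil_index c n = fib n + 1"
    using nil_index_eq_fib by blast+
qed

end
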